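(* Let $X$ be a K3 surface with Picard lattice $N(X)$ and let $H\in N(X)$ be a primitive element with $H^2=8$. Then there exists $h_1\in N(X)$ with $$h_1^2=\pm 4,\qquad H\cdot h_1\equiv 0\pmod 2,\qquad H\cdot[H,h_1]_{\mathrm{pr}}=\mathbb{Z}$$ if and only if there exists $D\in N(X)$ such that the Mukai vector $(2,H+2D,\pm1)$ is isotropic, i.e. $(H+2D)^2=\pm 4$ (with the same sign). Moreover the correspondence is given by $h_1=H+2D$: an $h_1$ with the first set of properties can be written as $h_1=H+2D$ with $D\in N(X)$, and for any $D\in N(X)$ with $(H+2D)^2=\pm4$ the element $h_1=H+2D$ has the first set of properties.
   Context: $N(X)$ is the Picard lattice of the K3 surface $X$; it is an even lattice. $[H,h_1]_{\mathrm{pr}}$ denotes the primitive sublattice of $N(X)$ generated by $H$ and $h_1$, i.e. $N(X)\cap(\mathbb{Q}H+\mathbb{Q}h_1)$, and $H\cdot[H,h_1]_{\mathrm{pr}}$ denotes the set $\{H\cdot x: x\in [H,h_1]_{\mathrm{pr}}\}\subseteq\mathbb{Z}$. A Mukai vector $(r,c_1,s)$ is isotropic when $c_1^2=2rs$. *)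

theory Defs
  imports "HOL-Analysis.Analysis"
begin

text \<open>A lattice of rank CARD('n) is modelled as int^'n with the bilinear form
  given by an integer Gram matrix G.\<close>

definition bform :: "int^'n^'n \<Rightarrow> int^'n \<Rightarrow> int^'n \<Rightarrow> int" where
  "bform G x y = (\<Sum>i\<in>UNIV. \<Sum>j\<in>UNIV. x$i * G$i$j * y$j)"

definition even_lattice :: "int^'n^'n \<Rightarrow> bool" where
  "even_lattice G \<longleftrightarrow> (\<forall>i j. G$i$j = G$j$i) \<and> (\<forall>x. even (bform G x x))"

definition nondegenerate :: "int^'n^'n \<Rightarrow> bool" where
  "nondegenerate G \<longleftrightarrow> (\<forall>x. (\<forall>y. bform G x y = 0) \<longrightarrow> x = 0)"

text \<open>Hyperbolic: signature (1, rank-1).\<close>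
definition hyperbolic :: "int^'n^'n \<Rightarrow> bool" where
  "hyperbolic G \<longleftrightarrow> (\<exists>v. bform G v v > 0 \<and>
      (\<forall>w. bform G v w = 0 \<and> w \<noteq> 0 \<longrightarrow> bform G w w < 0))"

definition picard_lattice :: "int^'n^'n \<Rightarrow> bool" where
  "picard_lattice G \<longleftrightarrow> even_lattice G \<and> nondegenerate G \<and> hyperbolic G"

definition primitive_elt :: "int^'n \<Rightarrow> bool" where
  "primitive_elt x \<longleftrightarrow> x \<noteq> 0 \<and> (\<forall>(m::int) y. x = m *s y \<longrightarrow> m = 1 \<or> m = -1)"

text \<open>[H,h]_pr = N \<inter> (Q H + Q h).\<close>
definition prim_span :: "int^'n \<Rightarrow> int^'n \<Rightarrow> (int^'n) set" where
  "prim_span H h = {x. \<exists>p q :: rat. \<forall>i. of_int (x$i) = p * of_int (H$i) + q * of_int (h$i)}"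

end

theory Submission
  imports Defs
begin

(* Write h1 = H + 2D. Then h1^2 = 8 + 4 H.D + 4 D^2, and since D^2 is even, h1^2 = 4e with e odd
   forces H.D to be odd. So H.D is coprime to H^2 = 8, and already the integral combinations of
   H and D, which lie in [H,h1]_pr, pair with H onto Z.
   Conversely, if x in [H,h1]_pr has H.x = 1, clear denominators to d x = a H + b h1 with d, a, b
   not all even. Pairing with H gives d = 8a + b H.h1, which is even, so a H + b h1 = 0 mod 2
   with a or b odd. As H is primitive and h1 is not divisible by 2 (otherwise 8 divides h1^2),
   both a and b are odd, i.e. h1 = H mod 2. *)

lemma bform_add_left: "bform G (x + y) z = bform G x z + bform G y z"
  by (simp add: bform_def algebra_simps sum.distrib)

lemma bform_add_right: "bform G z (x + y) = bform G z x + bform G z y"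
  by (simp add: bform_def algebra_simps sum.distrib)

lemma bform_scale_left: "bform G (c *s x) y = c * bform G x y"
  by (simp add: bform_def algebra_simps sum_distrib_left)

lemma bform_scale_right: "bform G y (c *s x) = c * bform G y x"
  by (simp add: bform_def algebra_simps sum_distrib_left)

lemma bform_commute:
  assumes "\<forall>i j. G$i$j = G$j$i"
  shows "bform G x y = bform G y x"
  unfolding bform_def by (subst sum.swap) (simp add: assms algebra_simps)

lemma bform_add_double_self:
  assumes "\<forall>i j. G$i$j = G$j$i"
  shows "bform G (H + 2 *s D) (H + 2 *s D) = bform G H H + 4 * bform G H D + 4 * bform G D D"
  using bform_commute[OF assms, of D H]
  by (simp add: bform_add_left bform_add_right bform_scale_left bform_scale_right)

lemma vec_all_even_iff_double: "(\<forall>i. even (v $ i)) \<longleftrightarrow> (\<exists>w. v = 2 *s w)"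
  for v :: "int^'n"
proof
  assume "\<forall>i. even (v $ i)"
  then have "v = 2 *s (\<chi> i. v $ i div 2)"
    by (simp add: vec_eq_iff)
  then show "\<exists>w. v = 2 *s w" ..
qed auto

lemma primitive_elt_not_double: "primitive_elt H \<Longrightarrow> H \<noteq> 2 *s y"
  unfolding primitive_elt_def by force

lemma bform_self_double_not_4_times_odd:
  assumes "\<And>y. even (bform G y y)" and "odd e"
  shows "bform G (2 *s y) (2 *s y) \<noteq> 4 * e"
proof
  assume "bform G (2 *s y) (2 *s y) = 4 * e"
  then have "e = bform G y y"
    by (simp add: bform_scale_left bform_scale_right)
  then show False
    using assms by simp
qed

lemma prim_span_clear_denominators:
  assumes "x \<in> prim_span H h"
  obtains d :: nat and a b :: int where "d > 0" "int d *s x = a *s H + b *s h"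
proof -
  obtain p q :: rat where pq: "\<And>i. of_int (x$i) = p * of_int (H$i) + q * of_int (h$i)"
    using assms unfolding prim_span_def by auto
  obtain a1 b1 where "quotient_of p = (a1, b1)"
    by (cases "quotient_of p") auto
  then have p: "p = of_int a1 / of_int b1" and b1: "b1 > 0"
    using quotient_of_div quotient_of_denom_pos by blast+
  obtain a2 b2 where "quotient_of q = (a2, b2)"
    by (cases "quotient_of q") auto
  then have q: "q = of_int a2 / of_int b2" and b2: "b2 > 0"
    using quotient_of_div quotient_of_denom_pos by blast+
  have "(b1 * b2) * x$i = (a1 * b2) * H$i + (a2 * b1) * h$i" for i
  proof -
    have "(of_int ((b1 * b2) * x$i) :: rat) = of_int (b1 * b2) * (p * of_int (H$i) + q * of_int (h$i))"
      using pq by simp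
    also have "\<dots> = of_int ((a1 * b2) * H$i + (a2 * b1) * h$i)"
      using b1 b2 by (simp add: p q field_simps)
    finally show ?thesis
      by (simp only: of_int_eq_iff)
  qed
  then have "int (nat (b1 * b2)) *s x = (a1 * b2) *s H + (a2 * b1) *s h"
    using b1 b2 by (simp add: vec_eq_iff)
  moreover have "nat (b1 * b2) > 0"
    using b1 b2 by simp
  ultimately show thesis
    using that by blast
qed

lemma prim_span_reduced_representation:
  assumes "x \<in> prim_span H h"
  obtains d :: nat and a b :: int
  where "d > 0" "int d *s x = a *s H + b *s h" "odd d \<or> odd a \<or> odd b"
proof -
  have "\<exists>d' a' b'. d' > 0 \<and> int d' *s x = a' *s H + b' *s h \<and> (odd d' \<or> odd a' \<or> odd b')"
    if "d > 0" "int d *s x = a *s H + b *s h" for d a b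
    using that
  proof (induction d arbitrary: a b rule: less_induct)
    case (less d)
    show ?case
    proof (cases "odd d \<or> odd a \<or> odd b")
      case False
      then obtain d' a' b' where d': "d = 2 * d'" and "a = 2 * a'" "b = 2 * b'"
        by (auto elim!: evenE)
      have "int d' * x$i = a' * H$i + b' * h$i" for i
      proof -
        have "2 * (int d' * x$i) = 2 * (a' * H$i + b' * h$i)"
          using less.prems(2) d' \<open>a = 2 * a'\<close> \<open>b = 2 * b'\<close>
          by (simp add: vec_eq_iff algebra_simps)
        then show ?thesis
          by (metis mult_left_cancel zero_neq_numeral)
      qed
      then have "int d' *s x = a' *s H + b' *s h"
        by (simp add: vec_eq_iff)
      moreover have "d' < d" "d' > 0"
        using d' less.prems(1) by simp_all
      ultimately show ?thesis
        using less.IH by blast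
    qed (use less.prems in blast)
  qed
  with prim_span_clear_denominators[OF assms] that show thesis
    by metis
qed

lemma eq_add_double_if_pairing_hits_one:
  assumes "primitive_elt H" and "even (bform G H H)" and "even (bform G H h)"
    and "1 \<in> (\<lambda>x. bform G H x) ` prim_span H h"
    and "\<And>y. h \<noteq> 2 *s y"
  shows "\<exists>D. h = H + 2 *s D"
proof -
  obtain x where "x \<in> prim_span H h" and Hx: "bform G H x = 1"
    using assms(4) by auto
  then obtain d a b where rep: "int d *s x = a *s H + b *s h" and "odd d \<or> odd a \<or> odd b"
    using prim_span_reduced_representation by blast
  have "int d = a * bform G H H + b * bform G H h"
    using arg_cong[OF rep, of "bform G H"] Hx
    by (simp add: bform_add_right bform_scale_right)
  then have even_d: "even (int d)"
    using assms(2,3) by simp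
  then have odd_coeff: "odd a \<or> odd b"
    using \<open>odd d \<or> odd a \<or> odd b\<close> even_d by simp
  have comb_even: "even (a * H$i + b * h$i)" for i
  proof -
    have "int d * x$i = a * H$i + b * h$i"
      using arg_cong[OF rep, of "\<lambda>v. v $ i"] by simp
    then show ?thesis
      using even_d by (metis dvd_mult2)
  qed
  consider "odd a" "even b" | "even a" "odd b" | "odd a" "odd b"
    using odd_coeff by blast
  then show ?thesis
  proof cases
    case 1
    then have "\<forall>i. even (H$i)"
      using comb_even by simp
    then show ?thesis
      using primitive_elt_not_double[OF assms(1)] vec_all_even_iff_double by blast
  next
    case 2
    then have "\<forall>i. even (h$i)"
      using comb_even by simp
    then show ?thesis
      using assms(5) vec_all_even_iff_double by blast
  next
    case 3
    then have "\<forall>i. even ((h - H)$i)"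
      using comb_even by simp
    then obtain D where "h - H = 2 *s D"
      using vec_all_even_iff_double by blast
    then have "h = H + 2 *s D"
      by (simp add: algebra_simps)
    then show ?thesis ..
  qed
qed

lemma combination_in_prim_span_add_double: "m *s D + n *s H \<in> prim_span H (H + 2 *s D)"
  unfolding prim_span_def
proof (intro CollectI exI allI)
  fix i
  show "rat_of_int ((m *s D + n *s H) $ i)
    = (of_int n - of_int m / 2) * rat_of_int (H $ i) + (of_int m / 2) * rat_of_int ((H + 2 *s D) $ i)"
    by (simp add: field_simps)
qed

lemma pairing_image_prim_span_add_double:
  assumes "coprime (bform G H D) (bform G H H)"
  shows "(\<lambda>x. bform G H x) ` prim_span H (H + 2 *s D) = UNIV"
proof -
  obtain m n where bezout: "m * bform G H D + n * bform G H H = 1"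
    using bezout_int[of "bform G H D" "bform G H H"] assms by auto
  have "t \<in> (\<lambda>x. bform G H x) ` prim_span H (H + 2 *s D)" for t
  proof
    have "bform G H ((t * m) *s D + (t * n) *s H) = t * (m * bform G H D + n * bform G H H)"
      by (simp add: bform_add_right bform_scale_right algebra_simps)
    then show "t = bform G H ((t * m) *s D + (t * n) *s H)"
      using bezout by simp
  qed (rule combination_in_prim_span_add_double)
  then show ?thesis
    by blast
qed

lemma odd_coprime_eight: "odd k \<Longrightarrow> coprime k (8::int)"
  using coprime_power_right_iff[of k 2 3] by simp

theorem lemma3p2:
  fixes G :: "int^'n^'n" and H :: "int^'n" and \<epsilon> :: int
  assumes "picard_lattice G"
    and "primitive_elt H"
    and "bform G H H = 8"
    and "\<epsilon> = 1 \<or> \<epsilon> = -1"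
  shows "((\<exists>h1. bform G h1 h1 = 4 * \<epsilon> \<and> even (bform G H h1)
                 \<and> (\<lambda>x. bform G H x) ` prim_span H h1 = UNIV)
          \<longleftrightarrow> (\<exists>D. bform G (H + 2 *s D) (H + 2 *s D) = 4 * \<epsilon>))
       \<and> (\<forall>h1. bform G h1 h1 = 4 * \<epsilon> \<and> even (bform G H h1)
                 \<and> (\<lambda>x. bform G H x) ` prim_span H h1 = UNIV
               \<longrightarrow> (\<exists>D. h1 = H + 2 *s D))
       \<and> (\<forall>D. bform G (H + 2 *s D) (H + 2 *s D) = 4 * \<epsilon>
               \<longrightarrow> (let h1 = H + 2 *s D in
                     bform G h1 h1 = 4 * \<epsilon> \<and> even (bform G H h1)
                     \<and> (\<lambda>x. bform G H x) ` prim_span H h1 = UNIV))"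
proof -
  have sym: "\<forall>i j. G$i$j = G$j$i" and even_norm: "\<And>x. even (bform G x x)"
    using assms(1) unfolding picard_lattice_def even_lattice_def by auto
  have "odd \<epsilon>"
    using assms(4) by auto
  have to_double: "\<exists>D. h1 = H + 2 *s D"
    if "bform G h1 h1 = 4 * \<epsilon>" "even (bform G H h1)" "(\<lambda>x. bform G H x) ` prim_span H h1 = UNIV"
    for h1
    using that assms(2,3) bform_self_double_not_4_times_odd[OF even_norm \<open>odd \<epsilon>\<close>]
    by (intro eq_add_double_if_pairing_hits_one) auto
  have from_double: "bform G H (H + 2 *s D) = 8 + 2 * bform G H D
      \<and> (\<lambda>x. bform G H x) ` prim_span H (H + 2 *s D) = UNIV"
    if "bform G (H + 2 *s D) (H + 2 *s D) = 4 * \<epsilon>" for D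
  proof -
    have "\<epsilon> = 2 + bform G H D + bform G D D"
      using that bform_add_double_self[OF sym, of H D] assms(3) by simp
    then have "odd (bform G H D)"
      using \<open>odd \<epsilon>\<close> even_norm[of D] by auto
    then show ?thesis
      using assms(3) odd_coprime_eight pairing_image_prim_span_add_double[of G H D]
      by (simp add: bform_add_right bform_scale_right)
  qed
  show ?thesis
    using to_double from_double by (auto simp: Let_def) metis+
qed

end
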